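(* Let $\theta\in\mathbb{R}$ with $\omega_0:=\cos\theta\neq 0$, put $\gamma=\sin\theta$, and let $p\in\mathbb{R}$. Let $a_1,a_2$ be boson annihilation operators with creation operators $a_1^\dagger,a_2^\dagger$, satisfying $[a_j,a_k^\dagger]=\delta_{jk}$ and $[a_j,a_k]=[a_j^\dagger,a_k^\dagger]=0$. For $m=1,2,3$ define $$J_m^{\gamma}=\frac{i^{m-1}}{2}\sum_{j,k=1}^{2}\Big[c^{(4-m)}_{jk}+i^m(1-\delta_{m2})\,\gamma\, c^{(m)}_{jk}\Big]a_j^\dagger a_k ,$$ and set $J_0^\gamma=J_3^\gamma$ and $J_\pm^{\gamma}=\sum_{r=0}^{1}(\pm i)^r\omega_0^{\,r-p}J^{\gamma}_{r+1}=\omega_0^{-p}J_1^\gamma\pm i\,\omega_0^{1-p}J_2^\gamma$. Then $$[J_0^\gamma,J_\pm^\gamma]=\pm\omega_0J_\pm^\gamma,\qquad [J_+^\gamma,J_-^\gamma]=2\,\omega_0^{-2p+1}J_0^\gamma .$$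
   Context: $\delta$ is the Kronecker delta. The coefficient matrices are $c^{(1)}=\begin{pmatrix}-1&0\\0&1\end{pmatrix}$, $c^{(2)}=\begin{pmatrix}0&-1\\1&0\end{pmatrix}$, $c^{(3)}=\begin{pmatrix}0&1\\1&0\end{pmatrix}$ (entries $c^{(m)}_{jk}$, $j,k=1,2$). The identities are understood as identities of operators on the polynomial (finite-particle) subspace of the two-mode boson Fock space. *)

theory Defs
  imports "HOL-Analysis.Complex_Transcendental"
begin

text \<open>Two-mode boson Fock space: a state is given by its coefficients
  with respect to the number basis |n1,n2>, i.e. a function (nat * nat) => complex.
  The polynomial (finite-particle) subspace consists of the finitely supported ones.\<close>

type_synonym state = "nat \<times> nat \<Rightarrow> complex"
type_synonym op = "state \<Rightarrow> state"

definition fock_poly :: "state set" where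
  "fock_poly = {f. finite {n. f n \<noteq> 0}}"

text \<open>Annihilation operator a_j (j = 1, 2): a|n> = sqrt n |n-1>.\<close>
definition ann :: "nat \<Rightarrow> op" where
  "ann j f = (\<lambda>(n1, n2). if j = 1 then complex_of_real (sqrt (real (n1 + 1))) * f (n1 + 1, n2)
                         else complex_of_real (sqrt (real (n2 + 1))) * f (n1, n2 + 1))"

text \<open>Creation operator a_j^dagger (j = 1, 2): a^dagger|n> = sqrt(n+1) |n+1>.\<close>
definition cre :: "nat \<Rightarrow> op" where
  "cre j f = (\<lambda>(n1, n2). if j = 1
       then (if n1 = 0 then 0 else complex_of_real (sqrt (real n1)) * f (n1 - 1, n2))
       else (if n2 = 0 then 0 else complex_of_real (sqrt (real n2)) * f (n1, n2 - 1)))"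

definition cmat :: "nat \<Rightarrow> nat \<Rightarrow> nat \<Rightarrow> complex" where
  "cmat m j k =
     (if m = 1 then (if j = 1 \<and> k = 1 then -1 else if j = 2 \<and> k = 2 then 1 else 0)
      else if m = 2 then (if j = 1 \<and> k = 2 then -1 else if j = 2 \<and> k = 1 then 1 else 0)
      else (if j = 1 \<and> k = 2 then 1 else if j = 2 \<and> k = 1 then 1 else 0))"

definition kdelta :: "nat \<Rightarrow> nat \<Rightarrow> complex" where
  "kdelta a b = (if a = b then 1 else 0)"

definition Jg :: "real \<Rightarrow> nat \<Rightarrow> op" where
  "Jg \<gamma> m f = (\<lambda>n. (\<i> ^ (m - 1) / 2) *
      (\<Sum>j\<in>{1,2::nat}. \<Sum>k\<in>{1,2::nat}.
         (cmat (4 - m) j k + \<i> ^ m * (1 - kdelta m 2) * complex_of_real \<gamma> * cmat m j k)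
         * cre j (ann k f) n))"

text \<open>J_pm^gamma = sum_{r=0}^{1} (s i)^r omega0^(r-p) J_{r+1}^gamma with s = +1 or -1.
  Powers of omega0 (which may be negative) are complex principal powers.\<close>
definition Jpm :: "real \<Rightarrow> real \<Rightarrow> real \<Rightarrow> complex \<Rightarrow> op" where
  "Jpm \<omega>0 \<gamma> p s f = (\<lambda>n. \<Sum>r\<in>{0,1::nat}.
      (s * \<i>) ^ r * (complex_of_real \<omega>0 powr complex_of_real (real r - p)) * Jg \<gamma> (r + 1) f n)"

definition commutator :: "op \<Rightarrow> op \<Rightarrow> op" where
  "commutator A B f = (\<lambda>n. A (B f) n - B (A f) n)"

definition scaleop :: "complex \<Rightarrow> op \<Rightarrow> op" where
  "scaleop c A f = (\<lambda>n. c * A f n)"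

end

theory Submission
  imports Defs
begin

text \<open>The bilinears \<open>(a\<^sub>j\<^sup>\<dagger> a\<^sub>k)\<close> realise su(2) through the Schwinger operators \<open>X, Y, Z\<close>, and
  \<open>J\<^sub>1\<^sup>\<gamma> = X - i\<gamma>Z\<close>, \<open>J\<^sub>2\<^sup>\<gamma> = Y\<close>, \<open>J\<^sub>3\<^sup>\<gamma> = Z + i\<gamma>X\<close>. Since \<open>\<gamma>\<^sup>2 + \<omega>\<^sub>0\<^sup>2 = 1\<close>, these satisfy the deformed
  relations \<open>[J\<^sub>1,J\<^sub>2] = iJ\<^sub>3\<close>, \<open>[J\<^sub>2,J\<^sub>3] = iJ\<^sub>1\<close>, \<open>[J\<^sub>3,J\<^sub>1] = i\<omega>\<^sub>0\<^sup>2 J\<^sub>2\<close>, and the ladder relations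
  for \<open>J\<^sub>\<plusminus> = \<omega>\<^sub>0\<^sup>-\<^sup>p(J\<^sub>1 \<plusminus> i\<omega>\<^sub>0J\<^sub>2)\<close> follow from these by bilinearity of the commutator.\<close>

definition linear_op :: "op \<Rightarrow> bool" where
  "linear_op A \<longleftrightarrow> (\<forall>c d g h. A (\<lambda>n. c * g n + d * h n) = (\<lambda>n. c * A g n + d * A h n))"

definition op_lincomb :: "complex \<Rightarrow> op \<Rightarrow> complex \<Rightarrow> op \<Rightarrow> op" where
  "op_lincomb a A b B f = (\<lambda>n. a * A f n + b * B f n)"

lemma linear_opD: "linear_op A \<Longrightarrow> A (\<lambda>n. c * g n + d * h n) = (\<lambda>n. c * A g n + d * A h n)"
  unfolding linear_op_def by blast

lemma linear_op_comp: "linear_op A \<Longrightarrow> linear_op B \<Longrightarrow> linear_op (A \<circ> B)"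
  by (simp add: linear_op_def)

lemma linear_op_lincomb:
  assumes "linear_op A" "linear_op B"
  shows "linear_op (op_lincomb a A b B)"
  unfolding linear_op_def op_lincomb_def
  by (simp add: linear_opD[OF assms(1)] linear_opD[OF assms(2)] algebra_simps)

lemma commutator_eq_scaleop_apply:
  "commutator A B = scaleop c C \<Longrightarrow> A (B f) n = B (A f) n + c * C f n"
  by (drule fun_cong[where x = f], drule fun_cong[where x = n])
     (simp add: commutator_def scaleop_def algebra_simps)

locale deformed_su2 =
  fixes J1 J2 J3 :: op and \<omega> :: complex
  assumes linear: "linear_op J1" "linear_op J2" "linear_op J3"
    and commutator_12: "commutator J1 J2 = scaleop \<i> J3"
    and commutator_23: "commutator J2 J3 = scaleop \<i> J1"
    and commutator_31: "commutator J3 J1 = scaleop (\<i> * \<omega>\<^sup>2) J2"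
begin

lemma swap_apply:
  "J1 (J2 f) n = J2 (J1 f) n + \<i> * J3 f n"
  "J2 (J3 f) n = J3 (J2 f) n + \<i> * J1 f n"
  "J3 (J1 f) n = J1 (J3 f) n + \<i> * \<omega>\<^sup>2 * J2 f n"
  by (rule commutator_eq_scaleop_apply, rule commutator_12 commutator_23 commutator_31)+

lemma ladder_commutator:
  assumes "s * s = 1"
  shows "commutator J3 (op_lincomb P J1 (s * \<i> * \<omega> * P) J2)
           = scaleop (s * \<omega>) (op_lincomb P J1 (s * \<i> * \<omega> * P) J2)"
  using assms
  unfolding fun_eq_iff commutator_def scaleop_def op_lincomb_def linear_opD[OF linear(3)] swap_apply
  by (simp add: algebra_simps power2_eq_square)

lemma raising_lowering_commutator:
  "commutator (op_lincomb P J1 (\<i> * \<omega> * P) J2) (op_lincomb P J1 (- \<i> * \<omega> * P) J2)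
     = scaleop (2 * P\<^sup>2 * \<omega>) J3"
  unfolding fun_eq_iff commutator_def scaleop_def op_lincomb_def linear_opD[OF linear(1)]
    linear_opD[OF linear(2)] swap_apply
  by (simp add: algebra_simps power2_eq_square)

end

lemma deformed_su2_from_su2:
  assumes "deformed_su2 X Y Z 1" and "\<gamma>\<^sup>2 + \<omega>\<^sup>2 = 1"
  shows "deformed_su2 (op_lincomb 1 X (- \<i> * \<gamma>) Z) Y (op_lincomb 1 Z (\<i> * \<gamma>) X) \<omega>"
proof -
  interpret su2: deformed_su2 X Y Z 1
    by (fact assms(1))
  show ?thesis
  proof
    show "linear_op (op_lincomb 1 X (- \<i> * \<gamma>) Z)" "linear_op Y"
      "linear_op (op_lincomb 1 Z (\<i> * \<gamma>) X)"
      by (intro linear_op_lincomb su2.linear)+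
    show "commutator (op_lincomb 1 X (- \<i> * \<gamma>) Z) Y = scaleop \<i> (op_lincomb 1 Z (\<i> * \<gamma>) X)"
      "commutator Y (op_lincomb 1 Z (\<i> * \<gamma>) X) = scaleop \<i> (op_lincomb 1 X (- \<i> * \<gamma>) Z)"
      unfolding fun_eq_iff commutator_def scaleop_def op_lincomb_def linear_opD[OF su2.linear(2)]
        su2.swap_apply
      by (simp_all add: algebra_simps)
    have "\<omega>\<^sup>2 = 1 - \<gamma>\<^sup>2"
      using assms(2) by (simp add: algebra_simps)
    then show "commutator (op_lincomb 1 Z (\<i> * \<gamma>) X) (op_lincomb 1 X (- \<i> * \<gamma>) Z)
        = scaleop (\<i> * \<omega>\<^sup>2) Y"
      unfolding \<open>\<omega>\<^sup>2 = 1 - \<gamma>\<^sup>2\<close> fun_eq_iff commutator_def scaleop_def op_lincomb_def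
        linear_opD[OF su2.linear(1)] linear_opD[OF su2.linear(3)] su2.swap_apply
      by (simp add: algebra_simps power2_eq_square)
  qed
qed

lemma linear_op_ann: "linear_op (ann j)"
  by (auto simp: linear_op_def ann_def algebra_simps)

lemma linear_op_cre: "linear_op (cre j)"
  by (auto simp: linear_op_def cre_def algebra_simps)

lemma linear_op_cre_ann: "linear_op (cre j \<circ> ann k)"
  by (intro linear_op_comp linear_op_cre linear_op_ann)

definition csqrt_nat :: "nat \<Rightarrow> complex" where
  "csqrt_nat k = complex_of_real (sqrt (real k))"

lemma csqrt_nat_mult_self: "csqrt_nat k * csqrt_nat k = of_nat k"
  by (simp add: csqrt_nat_def flip: of_real_mult)

lemma csqrt_nat_mult_self': "csqrt_nat k * (csqrt_nat k * z) = of_nat k * z"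
  by (simp add: mult.assoc[symmetric] csqrt_nat_mult_self)

lemma cre_ann_number:
  "cre 1 (ann 1 f) (a, b) = of_nat a * f (a, b)"
  "cre 2 (ann 2 f) (a, b) = of_nat b * f (a, b)"
  by (auto simp: cre_def ann_def csqrt_nat_mult_self[unfolded csqrt_nat_def])

lemma cre_ann_hop:
  "cre 1 (ann 2 f) (a, b) = (if a = 0 then 0 else csqrt_nat a * csqrt_nat (b + 1) * f (a - 1, b + 1))"
  "cre 2 (ann 1 f) (a, b) = (if b = 0 then 0 else csqrt_nat b * csqrt_nat (a + 1) * f (a + 1, b - 1))"
  by (auto simp: cre_def ann_def csqrt_nat_def)

definition schwinger_x :: op where
  "schwinger_x = op_lincomb (1/2) (cre 1 \<circ> ann 2) (1/2) (cre 2 \<circ> ann 1)"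

definition schwinger_y :: op where
  "schwinger_y = op_lincomb (\<i>/2) (cre 2 \<circ> ann 1) (-\<i>/2) (cre 1 \<circ> ann 2)"

definition schwinger_z :: op where
  "schwinger_z = op_lincomb (1/2) (cre 1 \<circ> ann 1) (-1/2) (cre 2 \<circ> ann 2)"

lemmas schwinger_defs = schwinger_x_def schwinger_y_def schwinger_z_def

lemma linear_op_schwinger:
  "linear_op schwinger_x" "linear_op schwinger_y" "linear_op schwinger_z"
  unfolding schwinger_defs by (intro linear_op_lincomb linear_op_cre_ann)+

lemma schwinger_commutators:
  "commutator schwinger_x schwinger_y = scaleop \<i> schwinger_z"
  "commutator schwinger_y schwinger_z = scaleop \<i> schwinger_x"
  "commutator schwinger_z schwinger_x = scaleop \<i> schwinger_y"
  unfolding fun_eq_iff split_paired_All commutator_def scaleop_def schwinger_defs op_lincomb_def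
    comp_apply cre_ann_number cre_ann_hop
  by (auto simp: algebra_simps csqrt_nat_mult_self csqrt_nat_mult_self' split: if_splits;
      simp add: field_simps csqrt_nat_mult_self csqrt_nat_mult_self')+

interpretation schwinger: deformed_su2 schwinger_x schwinger_y schwinger_z 1
  by unfold_locales (simp_all add: linear_op_schwinger schwinger_commutators)

lemma Jg_schwinger:
  "Jg \<gamma> 1 = op_lincomb 1 schwinger_x (- \<i> * \<gamma>) schwinger_z"
  "Jg \<gamma> 2 = schwinger_y"
  "Jg \<gamma> 3 = op_lincomb 1 schwinger_z (\<i> * \<gamma>) schwinger_x"
  unfolding fun_eq_iff Jg_def schwinger_defs op_lincomb_def comp_apply cmat_def kdelta_def
  by (simp_all add: algebra_simps add_divide_distrib diff_divide_distrib power3_eq_cube)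

lemma Jpm_eq_lincomb:
  "Jpm \<omega> \<gamma> p s = op_lincomb (of_real \<omega> powr of_real (- p)) (Jg \<gamma> 1)
     (s * \<i> * of_real \<omega> * of_real \<omega> powr of_real (- p)) (Jg \<gamma> 2)"
proof -
  have "complex_of_real \<omega> powr complex_of_real (1 - p)
      = \<omega> * complex_of_real \<omega> powr complex_of_real (- p)"
    using powr_add[of "complex_of_real \<omega>" 1 "complex_of_real (- p)"] by simp
  then show ?thesis
    by (simp add: fun_eq_iff Jpm_def op_lincomb_def numeral_2_eq_2)
qed

theorem mainTheorem3:
  fixes \<theta> p :: real
  assumes "cos \<theta> \<noteq> 0"
  shows "\<forall>f\<in>fock_poly.
     (\<forall>s\<in>{1, -1::complex}.
        commutator (Jg (sin \<theta>) 3) (Jpm (cos \<theta>) (sin \<theta>) p s) f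
          = scaleop (s * complex_of_real (cos \<theta>)) (Jpm (cos \<theta>) (sin \<theta>) p s) f)
     \<and> commutator (Jpm (cos \<theta>) (sin \<theta>) p 1) (Jpm (cos \<theta>) (sin \<theta>) p (-1)) f
          = scaleop (2 * (complex_of_real (cos \<theta>) powr complex_of_real (- 2 * p + 1)))
                    (Jg (sin \<theta>) 3) f"
proof -
  define \<omega> where "\<omega> = complex_of_real (cos \<theta>)"
  define P where "P = \<omega> powr complex_of_real (- p)"
  have "(complex_of_real (sin \<theta>))\<^sup>2 + \<omega>\<^sup>2 = 1"
    unfolding \<omega>_def by (simp flip: of_real_power of_real_add)
  then interpret J: deformed_su2 "Jg (sin \<theta>) 1" "Jg (sin \<theta>) 2" "Jg (sin \<theta>) 3" \<omega>
    unfolding Jg_schwinger by (rule deformed_su2_from_su2[OF schwinger.deformed_su2_axioms])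
  have Jpm: "Jpm (cos \<theta>) (sin \<theta>) p s
      = op_lincomb P (Jg (sin \<theta>) 1) (s * \<i> * \<omega> * P) (Jg (sin \<theta>) 2)" for s
    unfolding Jpm_eq_lincomb P_def \<omega>_def ..
  have ladder: "commutator (Jg (sin \<theta>) 3) (Jpm (cos \<theta>) (sin \<theta>) p s)
      = scaleop (s * \<omega>) (Jpm (cos \<theta>) (sin \<theta>) p s)" if "s \<in> {1, -1}" for s
    unfolding Jpm using that by (intro J.ladder_commutator) auto
  have "complex_of_real (- 2 * p + 1) = complex_of_real (- p) + complex_of_real (- p) + 1"
    by simp
  then have "\<omega> powr complex_of_real (- 2 * p + 1) = P\<^sup>2 * \<omega>"
    unfolding P_def power2_eq_square by (simp only: powr_add powr_to_1)
  then have raising_lowering: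
    "commutator (Jpm (cos \<theta>) (sin \<theta>) p 1) (Jpm (cos \<theta>) (sin \<theta>) p (-1))
      = scaleop (2 * \<omega> powr complex_of_real (- 2 * p + 1)) (Jg (sin \<theta>) 3)"
    unfolding Jpm using J.raising_lowering_commutator[of P] by (simp add: mult.assoc)
  show ?thesis
    using ladder raising_lowering by (simp add: \<omega>_def)
qed

end
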